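(* The eventual equality relation $E_0(\mathbb{N})$ on the Baire space $\mathbb{N}^\mathbb{N}$ is $\Pi^0_1$-graphable with diameter $2$.
   Context: $xE_0(\mathbb{N})y$ iff there is $m$ with $x(n)=y(n)$ for all $n\ge m$ ($x,y\in\mathbb{N}^\mathbb{N}$). $E$ is $\Gamma$-graphable with diameter $k$ if there is a simple undirected graph $G$ in $\Gamma$ whose connectedness relation equals $E$ and $k$ is the least integer such that any two $G$-connected points are joined by a path of length at most $k$. *)

theory Defs
  imports "HOL-Analysis.Analysis"
begin

definition E0 :: "(nat \<Rightarrow> nat) \<Rightarrow> (nat \<Rightarrow> nat) \<Rightarrow> bool" where
  "E0 x y \<longleftrightarrow> (\<exists>m. \<forall>n\<ge>m. x n = y n)"

definition simple_graph :: "('a \<Rightarrow> 'a \<Rightarrow> bool) \<Rightarrow> bool" where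
  "simple_graph G \<longleftrightarrow> (\<forall>x y. G x y \<longrightarrow> G y x) \<and> (\<forall>x. \<not> G x x)"

definition diam_le :: "('a \<Rightarrow> 'a \<Rightarrow> bool) \<Rightarrow> nat \<Rightarrow> bool" where
  "diam_le G k \<longleftrightarrow> (\<forall>x y. G\<^sup>*\<^sup>* x y \<longrightarrow> (\<exists>n\<le>k. (G ^^ n) x y))"

definition has_diameter :: "('a \<Rightarrow> 'a \<Rightarrow> bool) \<Rightarrow> nat \<Rightarrow> bool" where
  "has_diameter G k \<longleftrightarrow> diam_le G k \<and> (\<forall>j<k. \<not> diam_le G j)"

end

theory Submission
  imports Defs
begin

text \<open>Join x and y when they differ at coordinate 0 and agree from coordinate
  max (x 0) (y 0) on. Each of the countably many constraints involves finitely many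
  coordinates, so the edge set is closed. If x and y agree from m on, then the point z
  obtained from x by making z 0 larger than m, x 0 and y 0 is adjacent to both, so the
  diameter is at most 2; two points differing only at coordinate 1 are related but not
  adjacent, so it is not 1.\<close>

instance prod :: (discrete_topology, discrete_topology) discrete_topology
proof
  fix S :: "('a \<times> 'b) set"
  show "open S"
  proof (rule open_prod_intro)
    fix x assume "x \<in> S"
    then show "\<exists>A B. open A \<and> open B \<and> x \<in> A \<times> B \<and> A \<times> B \<subseteq> S"
      by (intro exI[of _ "{fst x}"] exI[of _ "{snd x}"]) (auto intro: open_discrete)
  qed
qed

lemma closed_Collect_discrete:
  fixes f :: "'a::topological_space \<Rightarrow> 'b::discrete_topology"
  assumes "continuous_on UNIV f"
  shows "closed {x. P (f x)}"
  using closed_vimage[OF _ assms, of "Collect P"] by (simp add: closed_def open_discrete vimage_def)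

lemma rtranclp_E0: "E0\<^sup>*\<^sup>* = E0"
proof (rule rtranclp_ident_if_reflp_and_transp)
  show "reflp E0" by (auto simp: reflp_def E0_def)
  show "transp E0"
  proof (rule transpI)
    fix x y z assume "E0 x y" "E0 y z"
    then obtain m1 m2 where "\<forall>n\<ge>m1. x n = y n" "\<forall>n\<ge>m2. y n = z n"
      unfolding E0_def by blast
    then show "E0 x z" unfolding E0_def by (intro exI[of _ "max m1 m2"]) auto
  qed
qed

lemma diam_le_if_relpowp:
  assumes "\<And>x y. G\<^sup>*\<^sup>* x y \<Longrightarrow> (G ^^ k) x y"
  shows "diam_le G k"
  using assms unfolding diam_le_def by blast

lemma has_diameter_2I:
  assumes "diam_le G 2" and "G\<^sup>*\<^sup>* x y" and "x \<noteq> y" and "\<not> G x y"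
  shows "has_diameter G 2"
proof -
  have "\<not> diam_le G j" if "j < 2" for j
  proof
    assume "diam_le G j"
    then obtain n where "n \<le> j" "(G ^^ n) x y"
      using \<open>G\<^sup>*\<^sup>* x y\<close> unfolding diam_le_def by blast
    with \<open>j < 2\<close> have "n = 0 \<or> n = 1" by auto
    with \<open>(G ^^ n) x y\<close> assms(3,4) show False by auto
  qed
  with assms(1) show ?thesis unfolding has_diameter_def by blast
qed

definition E0_graph :: "(nat \<Rightarrow> nat) \<Rightarrow> (nat \<Rightarrow> nat) \<Rightarrow> bool" where
  "E0_graph x y \<longleftrightarrow> x 0 \<noteq> y 0 \<and> (\<forall>n\<ge>max (x 0) (y 0). x n = y n)"

lemma simple_graph_E0_graph: "simple_graph E0_graph"
  unfolding simple_graph_def E0_graph_def by (auto simp: max.commute)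

lemma closed_E0_graph: "closed {p. E0_graph (fst p) (snd p)}"
proof -
  have edges: "{p. E0_graph (fst p) (snd p)} =
    (\<Inter>n. {p. (\<lambda>(a, b, c, d). a \<noteq> b \<and> (n \<ge> max a b \<longrightarrow> c = d))
                 (fst p 0, snd p 0, fst p n, snd p n)})"
    by (auto simp: E0_graph_def)
  have coordinates: "continuous_on UNIV (\<lambda>p :: (nat \<Rightarrow> nat) \<times> (nat \<Rightarrow> nat).
      (fst p 0, snd p 0, fst p n, snd p n))" for n
    by (intro continuous_intros continuous_on_compose2[OF continuous_on_product_coordinates]) auto
  show ?thesis
    unfolding edges by (intro closed_INT ballI closed_Collect_discrete coordinates)
qed

lemma E0_graph_imp_E0: "E0_graph x y \<Longrightarrow> E0 x y"
  unfolding E0_graph_def E0_def by blast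

lemma E0_imp_E0_graph_relpowp_2:
  assumes "E0 x y"
  shows "(E0_graph ^^ 2) x y"
proof -
  from assms obtain m where m: "\<forall>n\<ge>m. x n = y n" unfolding E0_def by blast
  define z where "z = x(0 := m + x 0 + y 0 + 1)"
  have "E0_graph x z" and "E0_graph z y" using m by (auto simp: E0_graph_def z_def)
  then show ?thesis by (auto simp: numeral_2_eq_2 relcompp_apply)
qed

lemma rtranclp_E0_graph: "E0_graph\<^sup>*\<^sup>* = E0"
proof (intro antisym predicate2I)
  fix x y assume "E0_graph\<^sup>*\<^sup>* x y"
  then have "E0\<^sup>*\<^sup>* x y" by (rule mono_rtranclp[rule_format, rotated]) (rule E0_graph_imp_E0)
  then show "E0 x y" by (simp add: rtranclp_E0)
next
  fix x y assume "E0 x y"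
  then show "E0_graph\<^sup>*\<^sup>* x y" by (rule relpowp_imp_rtranclp[OF E0_imp_E0_graph_relpowp_2])
qed

theorem proposition3p8:
  "\<exists>G :: (nat \<Rightarrow> nat) \<Rightarrow> (nat \<Rightarrow> nat) \<Rightarrow> bool.
     simple_graph G \<and>
     closed {p :: (nat \<Rightarrow> nat) \<times> (nat \<Rightarrow> nat). G (fst p) (snd p)} \<and>
     G\<^sup>*\<^sup>* = E0 \<and>
     has_diameter G 2"
proof (intro exI[of _ E0_graph] conjI simple_graph_E0_graph closed_E0_graph rtranclp_E0_graph)
  let ?x = "\<lambda>_ :: nat. 0 :: nat" and ?y = "\<lambda>n :: nat. if n = 1 then 1 else 0 :: nat"
  have "diam_le E0_graph 2"
    by (rule diam_le_if_relpowp) (simp add: rtranclp_E0_graph E0_imp_E0_graph_relpowp_2)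
  moreover have "E0_graph\<^sup>*\<^sup>* ?x ?y"
    unfolding rtranclp_E0_graph E0_def by (intro exI[of _ 2]) auto
  moreover have "?x \<noteq> ?y" by (auto simp: fun_eq_iff)
  moreover have "\<not> E0_graph ?x ?y" by (simp add: E0_graph_def)
  ultimately show "has_diameter E0_graph 2" by (intro has_diameter_2I)
qed

end
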